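(* The density $\mathcal D$ of $\mu$ satisfies $\mathcal D(t)\sim\dfrac{1}{\sqrt{2\pi(1-t)}}$ as $t\to1^-$.
   Context: Let $(m_n)$ be the positive sequence with $m_0=1$, $(1+m_1+\cdots+m_n)m_n=1$ ($n\ge1$), and $\mu$ the probability measure on $[0,1]$ with moments $m_n$. The measure $\mu$ is absolutely continuous on $]0,1[$ with an increasing density $\mathcal D$ (explicitly $\mathcal D(t)=\rho_0+\sum_{p\ge1}\sum_{k=1}^{2^{p-1}}\rho_{p,k}t^{-\xi_{p,k}}$, where $\xi_{p,k}$ are the nonzero zeros and $\rho_0=1/f'(0)$, $\rho_{p,k}=1/f'(\xi_{p,k})$ for the meromorphic extension $f$ of $\int_0^1\frac{1-t^z}{1-t}d\mu(t)$). *)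

theory Defs
  imports "HOL-Probability.Probability" "HOL-Library.Landau_Symbols"
begin

definition moment_seq :: "(nat \<Rightarrow> real) \<Rightarrow> bool" where
  "moment_seq m \<longleftrightarrow> m 0 = 1 \<and> (\<forall>n. m n > 0) \<and>
     (\<forall>n\<ge>1. (1 + (\<Sum>k=1..n. m k)) * m n = 1)"

end

(*
  Put S n = 1 + m 1 + ... + m n.  The defining relation says m n = 1 / S n, i.e.
  S n = S (n - 1) + 1 / S n, so S n ^ 2 grows by 2 - 1 / S n ^ 2 per step and
  m n ~ 1 / sqrt (2 n).

  Karamata's Tauberian argument transfers this to the tail of mu.  For a polynomial p,
  sqrt n * (integral of t ^ n * p (t ^ n) d mu) tends, term by term, to c / sqrt pi times the
  integral over x > 0 of exp (- x) * p (exp (- x)) / sqrt x, where c = 1 / sqrt 2.  Squeezing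
  the step y |-> [y > exp (- 1)] between two polynomials of the form y * p y (Weierstrass
  approximations of piecewise linear ramps) gives mu ]exp (- 1 / n), 1] ~ 2 c / sqrt (pi n),
  and by monotonicity mu ]1 - h, 1] ~ sqrt (2 h / pi).

  Since the density is monotone, differencing this tail over ]1 - (1 + s) h, 1 - h] and
  ]1 - h, 1 - (1 - s) h] squeezes D (1 - h) * sqrt h between quantities tending to
  sqrt (2 / pi) (sqrt (1 + s) - 1) / s and sqrt (2 / pi) (1 - sqrt (1 - s)) / s, and both
  tend to sqrt (2 / pi) / 2 as s -> 0.
*)

theory Submission
  imports Defs "HOL-Real_Asymp.Real_Asymp"
begin

lemma tendsto_sandwich_approx:
  fixes f :: "'a \<Rightarrow> real"
  assumes "\<And>e. e > 0 \<Longrightarrow> \<exists>g h a b. eventually (\<lambda>x. g x \<le> f x \<and> f x \<le> h x) F \<and>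
             (g \<longlongrightarrow> a) F \<and> (h \<longlongrightarrow> b) F \<and> c - e \<le> a \<and> b \<le> c + e"
  shows "(f \<longlongrightarrow> c) F"
proof (rule order_tendstoI)
  fix y assume "y < c"
  then have "\<exists>g h a b. eventually (\<lambda>x. g x \<le> f x \<and> f x \<le> h x) F \<and>
      (g \<longlongrightarrow> a) F \<and> (h \<longlongrightarrow> b) F \<and> c - (c - y) / 2 \<le> a \<and> b \<le> c + (c - y) / 2"
    by (intro assms) simp
  then obtain g h :: "'a \<Rightarrow> real" and a :: real
    where bounds: "eventually (\<lambda>x. g x \<le> f x \<and> f x \<le> h x) F"
      and lim: "(g \<longlongrightarrow> a) F" and "c - (c - y) / 2 \<le> a"
    by blast
  with \<open>y < c\<close> have "eventually (\<lambda>x. y < g x) F"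
    by (intro order_tendstoD(1)[OF lim]) (simp add: field_simps)
  with bounds show "eventually (\<lambda>x. y < f x) F"
    by eventually_elim simp
next
  fix y assume "c < y"
  then have "\<exists>g h a b. eventually (\<lambda>x. g x \<le> f x \<and> f x \<le> h x) F \<and>
      (g \<longlongrightarrow> a) F \<and> (h \<longlongrightarrow> b) F \<and> c - (y - c) / 2 \<le> a \<and> b \<le> c + (y - c) / 2"
    by (intro assms) simp
  then obtain g h :: "'a \<Rightarrow> real" and b :: real
    where bounds: "eventually (\<lambda>x. g x \<le> f x \<and> f x \<le> h x) F"
      and lim: "(h \<longlongrightarrow> b) F" and "b \<le> c + (y - c) / 2"
    by blast
  with \<open>c < y\<close> have "eventually (\<lambda>x. h x < y) F"
    by (intro order_tendstoD(2)[OF lim]) (simp add: field_simps)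
  with bounds show "eventually (\<lambda>x. f x < y) F"
    by eventually_elim simp
qed

section \<open>Growth of the moments\<close>

lemma inverse_le_twice_sqrt_diff:
  fixes x :: real
  assumes "0 \<le> x"
  shows "1 / (x + 1) \<le> 2 * (sqrt (x + 1) - sqrt x)"
proof -
  have pos: "0 < sqrt (x + 1) + sqrt x"
    using assms by (simp add: add_pos_nonneg)
  have "(sqrt (x + 1) - sqrt x) * (sqrt (x + 1) + sqrt x) = 1"
    using assms by (simp add: algebra_simps)
  then have diff: "sqrt (x + 1) - sqrt x = 1 / (sqrt (x + 1) + sqrt x)"
    using pos by (simp add: eq_divide_eq)
  have "sqrt x \<le> x + 1" "sqrt (x + 1) \<le> x + 1"
    using assms by (auto intro!: real_le_lsqrt simp: power2_eq_square algebra_simps)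
  then have "1 / (x + 1) \<le> 2 / (sqrt (x + 1) + sqrt x)"
    using pos assms by (simp add: divide_simps)
  then show ?thesis
    by (simp add: diff)
qed

text \<open>An implicit Euler scheme for \<open>S' = 1 / S\<close>, whose solution is \<open>sqrt (2 t + 1)\<close>.\<close>

locale reciprocal_increment =
  fixes S :: "nat \<Rightarrow> real"
  assumes S_0: "S 0 = 1"
    and S_ge_1: "\<And>n. 1 \<le> S n"
    and S_Suc: "\<And>n. S (Suc n) = S n + 1 / S (Suc n)"
begin

lemma square_pos: "0 < S n ^ 2"
  using S_ge_1[of n] by simp

lemma square_Suc: "S (Suc n) ^ 2 = S n ^ 2 + 2 - 1 / S (Suc n) ^ 2"
proof -
  have "S n = S (Suc n) - 1 / S (Suc n)"
    using S_Suc[of n] by simp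
  then have "S n ^ 2 = S (Suc n) ^ 2 - 2 + 1 / S (Suc n) ^ 2"
    using S_ge_1[of "Suc n"] by (simp add: power2_diff power_divide)
  then show ?thesis
    by simp
qed

lemma square_lower: "real n + 1 \<le> S n ^ 2"
proof (induction n)
  case (Suc n)
  have "1 / S (Suc n) ^ 2 \<le> 1"
    using S_ge_1[of "Suc n"] by simp
  with Suc.IH square_Suc[of n] show ?case
    unfolding of_nat_Suc by argo
qed (simp add: S_0)

lemma square_upper: "S n ^ 2 \<le> 2 * real n + 1"
proof (induction n)
  case (Suc n)
  have "0 \<le> 1 / S (Suc n) ^ 2"
    by simp
  with Suc.IH square_Suc[of n] show ?case
    unfolding of_nat_Suc by argo
qed (simp add: S_0)

lemma square_lower_sharp: "2 * real n + 1 - 2 * sqrt n \<le> S n ^ 2"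
proof (induction n)
  case (Suc n)
  have "1 / S (Suc n) ^ 2 \<le> 1 / (real n + 1)"
    using square_lower[of "Suc n"] square_pos[of "Suc n"] by (intro divide_left_mono) auto
  also have "\<dots> \<le> 2 * (sqrt (real n + 1) - sqrt n)"
    by (rule inverse_le_twice_sqrt_diff) simp
  finally have "1 / S (Suc n) ^ 2 \<le> 2 * (sqrt (1 + real n) - sqrt n)"
    by (simp add: add.commute)
  with Suc.IH square_Suc[of n] show ?case
    unfolding of_nat_Suc by argo
qed (simp add: S_0)

lemma sqrt_div_tendsto: "(\<lambda>n. sqrt n / S n) \<longlonglongrightarrow> 1 / sqrt 2"
proof -
  have "(\<lambda>n. real n / S n ^ 2) \<longlonglongrightarrow> 1 / 2"
  proof (rule real_tendsto_sandwich)
    show "\<forall>\<^sub>F n in sequentially. real n / (2 * real n + 1) \<le> real n / S n ^ 2"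
      using square_upper square_pos
      by (intro always_eventually allI divide_left_mono mult_pos_pos) auto
    show "\<forall>\<^sub>F n in sequentially. real n / S n ^ 2 \<le> real n / (2 * real n + 1 - 2 * sqrt n)"
    proof (rule eventually_mono[OF eventually_ge_at_top[of 4]])
      fix n :: nat assume "4 \<le> n"
      then have "4 * real n \<le> real n * real n"
        using mult_right_mono[of 4 "real n" "real n"] by simp
      then have "sqrt n \<le> real n / 2"
        by (intro real_le_lsqrt) (auto simp: power2_eq_square)
      with \<open>4 \<le> n\<close> have "0 < 2 * real n + 1 - 2 * sqrt n"
        by simp
      then show "real n / S n ^ 2 \<le> real n / (2 * real n + 1 - 2 * sqrt n)"
        using square_lower_sharp[of n] square_pos[of n] by (intro divide_left_mono mult_pos_pos) auto
    qed
    show "(\<lambda>n. real n / (2 * real n + 1)) \<longlonglongrightarrow> 1 / 2" by real_asymp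
    show "(\<lambda>n. real n / (2 * real n + 1 - 2 * sqrt n)) \<longlonglongrightarrow> 1 / 2" by real_asymp
  qed
  then have "(\<lambda>n. sqrt (real n / S n ^ 2)) \<longlonglongrightarrow> sqrt (1 / 2)"
    by (rule tendsto_real_sqrt)
  also have "(\<lambda>n. sqrt (real n / S n ^ 2)) = (\<lambda>n. sqrt n / S n)"
  proof
    fix n
    show "sqrt (real n / S n ^ 2) = sqrt n / S n"
      using S_ge_1[of n] by (simp add: real_sqrt_divide)
  qed
  also have "sqrt (1 / 2) = 1 / sqrt 2"
    by (simp add: real_sqrt_divide)
  finally show ?thesis .
qed

end

lemma moment_seq_sqrt_asymp:
  assumes "moment_seq m"
  shows "(\<lambda>n. sqrt n * m n) \<longlonglongrightarrow> 1 / sqrt 2"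
proof -
  define S where "S n = 1 + (\<Sum>k=1..n. m k)" for n
  have "0 < m n" for n
    using assms by (simp add: moment_seq_def)
  then have S_ge_1: "1 \<le> S n" for n
    unfolding S_def by (simp add: sum_nonneg less_imp_le)
  have "\<forall>n\<ge>1. S n * m n = 1"
    using assms by (simp add: moment_seq_def S_def)
  then have m_Suc: "m (Suc n) = 1 / S (Suc n)" for n
    using S_ge_1[of "Suc n"] by (auto simp: field_simps)
  have "S (Suc n) = S n + m (Suc n)" for n
    by (simp add: S_def)
  then have "S (Suc n) = S n + 1 / S (Suc n)" for n
    by (simp only: m_Suc)
  moreover have "S 0 = 1"
    by (simp add: S_def)
  ultimately have "(\<lambda>n. sqrt n / S n) \<longlonglongrightarrow> 1 / sqrt 2"
    using S_ge_1 by (intro reciprocal_increment.sqrt_div_tendsto reciprocal_increment.intro)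
  moreover have "sqrt n / S n = sqrt n * m n" for n
    by (cases n) (simp_all add: m_Suc)
  ultimately show ?thesis
    by simp
qed

lemma sqrt_scaled_subsequence:
  fixes x :: "nat \<Rightarrow> real"
  assumes lim: "(\<lambda>n. sqrt n * x n) \<longlonglongrightarrow> c" and "0 < k"
  shows "(\<lambda>n. sqrt n * x (n * k)) \<longlonglongrightarrow> c / sqrt k"
proof -
  have "strict_mono (\<lambda>n. n * k)"
    using \<open>0 < k\<close> by (intro strict_monoI) simp
  from LIMSEQ_subseq_LIMSEQ[OF lim this]
  have "(\<lambda>n. sqrt (real (n * k)) * x (n * k)) \<longlonglongrightarrow> c"
    by (simp add: o_def)
  then have "(\<lambda>n. sqrt (real (n * k)) * x (n * k) / sqrt k) \<longlonglongrightarrow> c / sqrt k"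
    by (intro tendsto_divide tendsto_const) (use \<open>0 < k\<close> in simp_all)
  moreover have "sqrt (real (n * k)) * x (n * k) / sqrt k = sqrt n * x (n * k)" for n
    using \<open>0 < k\<close> by (simp add: real_sqrt_mult)
  ultimately show ?thesis
    by simp
qed

section \<open>Laplace transform of the inverse square root\<close>

lemma has_integral_rescale_nonneg:
  fixes f :: "real \<Rightarrow> real"
  assumes f: "(f has_integral I) {0..}" and nonneg: "\<And>x. 0 \<le> x \<Longrightarrow> 0 \<le> f x" and "0 < k"
  shows "((\<lambda>x. f (k * x)) has_integral I / k) {0..}"
proof -
  define F where "F = (\<lambda>x. if x \<in> {0..} then f x else 0)"
  have F_nonneg: "0 \<le> F x" for x
    using nonneg by (simp add: F_def)
  have "(F has_integral I) UNIV"
    using f unfolding F_def has_integral_restrict_UNIV .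
  then have F_meas: "F \<in> borel_measurable lebesgue"
    and F_int: "(\<integral>\<^sup>+x. F x \<partial>lebesgue) = ennreal I" and "0 \<le> I"
    using has_integral_iff_nn_integral_lebesgue[of F] F_nonneg by auto
  have F_scaled_meas: "(\<lambda>x. F (k * x)) \<in> borel_measurable lebesgue"
    using measurable_compose[OF lebesgue_affine_measurable[where c = "\<lambda>_. k" and t = 0] F_meas]
      \<open>0 < k\<close> by simp
  have "ennreal k * (\<integral>\<^sup>+x. F (k * x) \<partial>lebesgue) = ennreal k * ennreal (I / k)"
    using nn_integral_real_affine_lebesgue[of "\<lambda>x. ennreal (F x)" k 0] F_meas F_int \<open>0 < k\<close> \<open>0 \<le> I\<close>
    by (simp add: ennreal_mult[symmetric])
  then have "(\<integral>\<^sup>+x. F (k * x) \<partial>lebesgue) = I / k"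
    using \<open>0 < k\<close> by (subst (asm) ennreal_mult_cancel_left) auto
  then have "((\<lambda>x. F (k * x)) has_integral I / k) UNIV"
    using has_integral_iff_nn_integral_lebesgue[of "\<lambda>x. F (k * x)"] F_nonneg F_scaled_meas
      \<open>0 < k\<close> \<open>0 \<le> I\<close> by simp
  moreover have "(\<lambda>x. F (k * x)) = (\<lambda>x. if x \<in> {0..} then f (k * x) else 0)"
    using \<open>0 < k\<close> by (auto simp: F_def zero_le_mult_iff)
  ultimately show ?thesis
    by (simp only: has_integral_restrict_UNIV)
qed

lemma has_integral_exp_neg_div_sqrt:
  fixes k :: real
  assumes "0 < k"
  shows "((\<lambda>x. exp (- (k * x)) / sqrt x) has_integral sqrt (pi / k)) {0..}"
proof -
  have "((\<lambda>t. t powr (1/2 - 1) / exp t) has_integral sqrt pi) {0..}"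
    using Gamma_integral_real[of "1/2"] by (simp add: Gamma_one_half_real)
  then have "((\<lambda>x. (k * x) powr (1/2 - 1) / exp (k * x)) has_integral sqrt pi / k) {0..}"
    using assms by (intro has_integral_rescale_nonneg) auto
  then have "((\<lambda>x. sqrt k * ((k * x) powr (1/2 - 1) / exp (k * x))) has_integral sqrt k * (sqrt pi / k)) {0..}"
    by (rule has_integral_mult_right)
  also have "sqrt k * (sqrt pi / k) = sqrt (pi / k)"
    using assms by (simp add: real_sqrt_divide field_simps)
  finally have scaled: "((\<lambda>x. sqrt k * ((k * x) powr (1/2 - 1) / exp (k * x))) has_integral sqrt (pi / k)) {0..}" .
  have integrand_eq: "sqrt k * ((k * x) powr (1/2 - 1) / exp (k * x)) = exp (- (k * x)) / sqrt x" if "x \<in> {0..}" for x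
  proof (cases "x = 0")
    case False
    with that assms have "(k * x) powr (1/2 - 1) = 1 / (sqrt k * sqrt x)"
      by (simp add: powr_minus_divide powr_half_sqrt[symmetric] real_sqrt_mult powr_mult[symmetric])
    with assms show ?thesis
      by (simp add: exp_minus field_simps)
  qed simp
  show ?thesis
    by (rule has_integral_eq[OF integrand_eq scaled])
qed

lemma has_integral_indicator_div_sqrt:
  fixes a b :: real
  assumes "0 \<le> a" "a \<le> b"
  shows "((\<lambda>x. indicator {a..b} x / sqrt x) has_integral 2 * (sqrt b - sqrt a)) {0..}"
proof -
  have "((\<lambda>x. 1 / sqrt x) has_integral 2 * sqrt b - 2 * sqrt a) {a..b}"
  proof (rule fundamental_theorem_of_calculus_interior)
    show "continuous_on {a..b} (\<lambda>x. 2 * sqrt x)"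
      by (intro continuous_intros)
    fix x assume "x \<in> {a<..<b}"
    then have "0 < x"
      using assms by simp
    then have "((\<lambda>x. 2 * sqrt x) has_real_derivative 1 / sqrt x) (at x)"
      by (auto intro!: derivative_eq_intros simp: field_simps)
    then show "((\<lambda>x. 2 * sqrt x) has_vector_derivative 1 / sqrt x) (at x)"
      by (simp add: has_real_derivative_iff_has_vector_derivative)
  qed (use assms in simp)
  moreover have "{a..b} \<subseteq> {0..}"
    using assms by auto
  ultimately have "((\<lambda>x. if x \<in> {a..b} then 1 / sqrt x else 0) has_integral 2 * (sqrt b - sqrt a)) {0..}"
    by (simp only: has_integral_restrict right_diff_distrib)
  then show ?thesis
    by (rule has_integral_eq[rotated]) (simp add: indicator_def)
qed

lemma has_integral_exp_polynomial_div_sqrt: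
  "((\<lambda>x. exp (- x) * (\<Sum>i\<le>N. a i * exp (- x) ^ i) / sqrt x)
     has_integral (\<Sum>i\<le>N. a i * sqrt (pi / (i + 1)))) {0..}"
proof -
  have "exp (- x) * exp (- x) ^ i = exp (- (real (i + 1) * x))" for x :: real and i
  proof -
    have "exp (- x) ^ (i + 1) = exp (- (real (i + 1) * x))"
      by (metis exp_of_nat_mult mult_minus_right)
    then show ?thesis
      by (simp only: power_add power_one_right mult.commute)
  qed
  then have "exp (- x) * (\<Sum>i\<le>N. a i * exp (- x) ^ i) / sqrt x
      = (\<Sum>i\<le>N. a i * (exp (- (real (i + 1) * x)) / sqrt x))" for x :: real
    by (simp add: sum_distrib_left sum_divide_distrib mult_ac)
  moreover have "((\<lambda>x. \<Sum>i\<le>N. a i * (exp (- (real (i + 1) * x)) / sqrt x))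
      has_integral (\<Sum>i\<le>N. a i * sqrt (pi / real (i + 1)))) {0..}"
    by (intro has_integral_sum has_integral_mult_right has_integral_exp_neg_div_sqrt) auto
  ultimately show ?thesis
    by simp
qed

lemma integrable_exp_polynomial_div_sqrt:
  assumes "real_polynomial_function g"
  shows "(\<lambda>x. exp (- x) * g (exp (- x)) / sqrt x) integrable_on {0..}"
  using assms has_integral_exp_polynomial_div_sqrt
  by (auto simp: real_polynomial_function_iff_sum integrable_on_def)

lemma has_integral_step_exp_div_sqrt:
  "((\<lambda>x. indicator {exp (- 1)<..} (exp (- x)) / sqrt x) has_integral 2) {0..}"
proof -
  have "((\<lambda>x. indicator {0..1} x / sqrt x) has_integral 2) {0..}"
    using has_integral_indicator_div_sqrt[of 0 1] by simp
  then show ?thesis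
    by (rule has_integral_spike_finite[of "{1}", rotated 2]) (auto simp: indicator_def)
qed

section \<open>Polynomial approximation of a step function\<close>

definition ramp :: "real \<Rightarrow> real \<Rightarrow> real \<Rightarrow> real" where
  "ramp a b y = max 0 (min 1 ((y - a) / (b - a)))"

lemma ramp_nonneg: "0 \<le> ramp a b y"
  and ramp_le_1: "ramp a b y \<le> 1"
  by (auto simp: ramp_def)

lemma ramp_eq_0: "a < b \<Longrightarrow> y \<le> a \<Longrightarrow> ramp a b y = 0"
  by (simp add: ramp_def divide_nonpos_pos)

lemma ramp_eq_1: "a < b \<Longrightarrow> b \<le> y \<Longrightarrow> ramp a b y = 1"
  by (simp add: ramp_def le_divide_eq)

lemma ramp_le_indicator: "a < b \<Longrightarrow> ramp a b y \<le> indicator {a<..} y"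
  by (cases "a < y") (simp_all add: ramp_le_1 ramp_eq_0 ramp_eq_1)

lemma indicator_le_ramp: "a < b \<Longrightarrow> indicator {b<..} y \<le> ramp a b y"
  by (cases "b < y") (simp_all add: ramp_nonneg ramp_eq_0 ramp_eq_1)

lemma indicator_minus_ramp_le: "a < b \<Longrightarrow> indicator {a<..} y - ramp a b y \<le> indicator {a..b} y"
  by (cases "a < y"; cases "b \<le> y") (simp_all add: ramp_nonneg ramp_eq_0 ramp_eq_1)

lemma ramp_minus_indicator_le: "a < b \<Longrightarrow> ramp a b y - indicator {b<..} y \<le> indicator {a..b} y"
  by (cases "a \<le> y"; cases "b < y") (simp_all add: ramp_le_1 ramp_eq_0 ramp_eq_1)

lemma continuous_on_ramp: "a < b \<Longrightarrow> continuous_on S (ramp a b)"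
  unfolding ramp_def by (intro continuous_intros) simp

lemma polynomial_approx_vanishing_near_0:
  fixes h :: "real \<Rightarrow> real"
  assumes cont: "continuous_on {0..1} h" and "0 < a"
    and vanish: "\<And>y. 0 \<le> y \<Longrightarrow> y \<le> a \<Longrightarrow> h y = 0" and "0 < \<delta>"
  obtains g where "real_polynomial_function g" "\<And>y. y \<in> {0..1} \<Longrightarrow> \<bar>h y - y * g y\<bar> \<le> \<delta> * y"
proof -
  have "continuous_on {0..1} (\<lambda>y. h y / max y a)"
    using cont \<open>0 < a\<close> by (intro continuous_intros) auto
  then obtain g where poly: "real_polynomial_function g"
    and approx: "\<And>y. y \<in> {0..1} \<Longrightarrow> \<bar>h y / max y a - g y\<bar> < \<delta>"
    using Stone_Weierstrass_real_polynomial_function[OF compact_Icc _ \<open>0 < \<delta>\<close>] by blast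
  have "\<bar>h y - y * g y\<bar> \<le> \<delta> * y" if y: "y \<in> {0..1}" for y
  proof -
    define k where "k = h y / max y a"
    have "h y = y * k"
      using vanish[of y] y \<open>0 < a\<close> by (cases "y \<le> a") (auto simp: k_def)
    then have "\<bar>h y - y * g y\<bar> = y * \<bar>k - g y\<bar>"
      using y by (simp add: abs_mult flip: right_diff_distrib)
    also have "\<dots> \<le> y * \<delta>"
      using approx[OF y] y by (intro mult_left_mono) (auto simp: k_def)
    finally show ?thesis
      by (simp add: mult.commute)
  qed
  with poly show ?thesis
    by (rule that)
qed

text \<open>Under \<open>y = exp (- x)\<close>, an error supported on \<open>[exp (- b), exp (- a)]\<close> costs at most
  the integral of \<open>1 / sqrt x\<close> over \<open>[a, b]\<close>.\<close>

lemma exp_div_sqrt_integral_diff_le: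
  fixes u v :: "real \<Rightarrow> real"
  assumes u: "((\<lambda>x. u (exp (- x)) / sqrt x) has_integral U) {0..}"
    and v: "((\<lambda>x. v (exp (- x)) / sqrt x) has_integral V) {0..}"
    and "0 \<le> a" "a \<le> b"
    and diff: "\<And>y. 0 < y \<Longrightarrow> y \<le> 1 \<Longrightarrow> u y - v y \<le> indicator {exp (- b)..exp (- a)} y + \<delta> * y"
  shows "U - V \<le> 2 * (sqrt b - sqrt a) + \<delta> * sqrt pi"
proof -
  have "((\<lambda>x. u (exp (- x)) / sqrt x - v (exp (- x)) / sqrt x) has_integral U - V) {0..}"
    using u v by (rule has_integral_diff)
  moreover have "((\<lambda>x. indicator {a..b} x / sqrt x + \<delta> * (exp (- (1 * x)) / sqrt x))
      has_integral 2 * (sqrt b - sqrt a) + \<delta> * sqrt (pi / 1)) {0..}"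
    using assms by (intro has_integral_add has_integral_mult_right has_integral_indicator_div_sqrt
        has_integral_exp_neg_div_sqrt) auto
  moreover have "u (exp (- x)) / sqrt x - v (exp (- x)) / sqrt x
      \<le> indicator {a..b} x / sqrt x + \<delta> * (exp (- (1 * x)) / sqrt x)" if "x \<in> {0..}" for x
  proof -
    have "indicator {exp (- b)..exp (- a)} (exp (- x)) = (indicator {a..b} x :: real)"
      by (auto simp: indicator_def)
    then have "u (exp (- x)) - v (exp (- x)) \<le> indicator {a..b} x + \<delta> * exp (- x)"
      using diff[of "exp (- x)"] that by simp
    from divide_right_mono[OF this, of "sqrt x"] that show ?thesis
      by (simp add: diff_divide_distrib add_divide_distrib)
  qed
  ultimately have "U - V \<le> 2 * (sqrt b - sqrt a) + \<delta> * sqrt (pi / 1)"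
    by (rule has_integral_le)
  then show ?thesis
    by simp
qed

lemma sqrt_pi_le_2: "sqrt pi \<le> 2"
  using pi_less_4 by (intro real_le_lsqrt) auto

lemma ramp_polynomial_approx:
  assumes "0 < a" "a < b" "0 < \<delta>"
  obtains g where "real_polynomial_function g"
    "\<And>y. y \<in> {0..1} \<Longrightarrow> \<bar>ramp a b y - y * g y\<bar> \<le> \<delta> * y"
  using polynomial_approx_vanishing_near_0[OF continuous_on_ramp[OF \<open>a < b\<close>] \<open>0 < a\<close> _ \<open>0 < \<delta>\<close>]
    ramp_eq_0[OF \<open>a < b\<close>] by blast

lemma polynomial_below_step:
  assumes "0 < \<eta>" "\<eta> < 1" "0 < \<delta>"
  obtains g I where "real_polynomial_function g"
    "\<And>y. y \<in> {0..1} \<Longrightarrow> y * g y \<le> indicator {exp (- 1)<..} y"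
    "((\<lambda>x. exp (- x) * g (exp (- x)) / sqrt x) has_integral I) {0..}"
    "2 - I \<le> 2 * \<eta> + 2 * \<delta> * sqrt pi"
proof -
  define h where "h = ramp (exp (- 1)) (exp (- (1 - \<eta>)))"
  have ramp_ends: "exp (- 1) < exp (- (1 - \<eta>))"
    using assms by simp
  obtain g0 where "real_polynomial_function g0"
    and g0: "\<And>y. y \<in> {0..1} \<Longrightarrow> \<bar>h y - y * g0 y\<bar> \<le> \<delta> * y"
    unfolding h_def using ramp_polynomial_approx[OF exp_gt_zero ramp_ends \<open>0 < \<delta>\<close>] by blast
  define g where "g y = g0 y - \<delta>" for y
  have poly: "real_polynomial_function g"
    unfolding g_def using \<open>real_polynomial_function g0\<close> by auto
  then obtain I where I: "((\<lambda>x. exp (- x) * g (exp (- x)) / sqrt x) has_integral I) {0..}"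
    using integrable_exp_polynomial_div_sqrt by (auto simp: integrable_on_def)
  have below: "y * g y \<le> indicator {exp (- 1)<..} y" if "y \<in> {0..1}" for y
    using g0[OF that] ramp_le_indicator[OF ramp_ends, of y]
    by (simp add: h_def g_def algebra_simps)
  have "2 - I \<le> 2 * (sqrt 1 - sqrt (1 - \<eta>)) + (2 * \<delta>) * sqrt pi"
  proof (rule exp_div_sqrt_integral_diff_le[OF has_integral_step_exp_div_sqrt I])
    fix y :: real assume "0 < y" "y \<le> 1"
    have "indicator {exp (- 1)<..} y - h y \<le> indicator {exp (- 1)..exp (- (1 - \<eta>))} y"
      unfolding h_def using ramp_ends by (rule indicator_minus_ramp_le)
    moreover have "h y - y * g y \<le> 2 * \<delta> * y"
      using g0[of y] \<open>0 < y\<close> \<open>y \<le> 1\<close> by (simp add: g_def algebra_simps)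
    ultimately show "indicator {exp (- 1)<..} y - y * g y
        \<le> indicator {exp (- 1)..exp (- (1 - \<eta>))} y + 2 * \<delta> * y"
      by simp
  qed (use assms in auto)
  moreover have "1 - \<eta> \<le> sqrt (1 - \<eta>)"
    using assms by (intro real_le_rsqrt) (simp add: power2_eq_square mult_le_cancel_right1)
  ultimately have "2 - I \<le> 2 * \<eta> + 2 * \<delta> * sqrt pi"
    by simp
  with poly below I show ?thesis
    by (rule that)
qed

lemma polynomial_above_step:
  assumes "0 < \<eta>" "0 < \<delta>"
  obtains g I where "real_polynomial_function g"
    "\<And>y. y \<in> {0..1} \<Longrightarrow> indicator {exp (- 1)<..} y \<le> y * g y"
    "((\<lambda>x. exp (- x) * g (exp (- x)) / sqrt x) has_integral I) {0..}"
    "I - 2 \<le> 2 * \<eta> + 2 * \<delta> * sqrt pi"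
proof -
  define h where "h = ramp (exp (- (1 + \<eta>))) (exp (- 1))"
  have ramp_ends: "exp (- (1 + \<eta>)) < exp (- 1)"
    using assms by simp
  obtain g0 where "real_polynomial_function g0"
    and g0: "\<And>y. y \<in> {0..1} \<Longrightarrow> \<bar>h y - y * g0 y\<bar> \<le> \<delta> * y"
    unfolding h_def using ramp_polynomial_approx[OF exp_gt_zero ramp_ends \<open>0 < \<delta>\<close>] by blast
  define g where "g y = g0 y + \<delta>" for y
  have poly: "real_polynomial_function g"
    unfolding g_def using \<open>real_polynomial_function g0\<close> by auto
  then obtain I where I: "((\<lambda>x. exp (- x) * g (exp (- x)) / sqrt x) has_integral I) {0..}"
    using integrable_exp_polynomial_div_sqrt by (auto simp: integrable_on_def)
  have above: "indicator {exp (- 1)<..} y \<le> y * g y" if "y \<in> {0..1}" for y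
    using g0[OF that] indicator_le_ramp[OF ramp_ends, of y]
    by (simp add: h_def g_def algebra_simps)
  have "I - 2 \<le> 2 * (sqrt (1 + \<eta>) - sqrt 1) + (2 * \<delta>) * sqrt pi"
  proof (rule exp_div_sqrt_integral_diff_le[OF I has_integral_step_exp_div_sqrt])
    fix y :: real assume "0 < y" "y \<le> 1"
    have "h y - indicator {exp (- 1)<..} y \<le> indicator {exp (- (1 + \<eta>))..exp (- 1)} y"
      unfolding h_def using ramp_ends by (rule ramp_minus_indicator_le)
    moreover have "y * g y - h y \<le> 2 * \<delta> * y"
      using g0[of y] \<open>0 < y\<close> \<open>y \<le> 1\<close> by (simp add: g_def algebra_simps)
    ultimately show "y * g y - indicator {exp (- 1)<..} y
        \<le> indicator {exp (- (1 + \<eta>))..exp (- 1)} y + 2 * \<delta> * y"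
      by simp
  qed (use assms in auto)
  moreover have "sqrt (1 + \<eta>) \<le> 1 + \<eta>"
    using assms by (intro real_le_lsqrt) (auto simp: power2_eq_square)
  ultimately have "I - 2 \<le> 2 * \<eta> + 2 * \<delta> * sqrt pi"
    by simp
  with poly above I show ?thesis
    by (rule that)
qed

lemma polynomial_step_sandwich:
  fixes \<epsilon> :: real
  assumes "0 < \<epsilon>"
  obtains g1 g2 I1 I2 where "real_polynomial_function g1" "real_polynomial_function g2"
    "\<And>y. y \<in> {0..1} \<Longrightarrow> y * g1 y \<le> indicator {exp (- 1)<..} y"
    "\<And>y. y \<in> {0..1} \<Longrightarrow> indicator {exp (- 1)<..} y \<le> y * g2 y"
    "((\<lambda>x. exp (- x) * g1 (exp (- x)) / sqrt x) has_integral I1) {0..}"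
    "((\<lambda>x. exp (- x) * g2 (exp (- x)) / sqrt x) has_integral I2) {0..}"
    "2 - \<epsilon> \<le> I1" "I2 \<le> 2 + \<epsilon>"
proof -
  define \<eta> where "\<eta> = min (1 / 2) (\<epsilon> / 4)"
  have \<eta>: "0 < \<eta>" "\<eta> < 1" and "0 < \<epsilon> / 8"
    using assms by (auto simp: \<eta>_def)
  have "2 * \<eta> \<le> \<epsilon> / 2"
    by (simp add: \<eta>_def)
  moreover have "2 * (\<epsilon> / 8) * sqrt pi \<le> \<epsilon> / 2"
    using mult_left_mono[OF sqrt_pi_le_2, of "\<epsilon> / 4"] assms by simp
  ultimately have error: "2 * \<eta> + 2 * (\<epsilon> / 8) * sqrt pi \<le> \<epsilon>"
    by linarith
  obtain g1 I1 where "real_polynomial_function g1"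
    "\<And>y. y \<in> {0..1} \<Longrightarrow> y * g1 y \<le> indicator {exp (- 1)<..} y"
    "((\<lambda>x. exp (- x) * g1 (exp (- x)) / sqrt x) has_integral I1) {0..}"
    "2 - I1 \<le> 2 * \<eta> + 2 * (\<epsilon> / 8) * sqrt pi"
    using polynomial_below_step[OF \<eta> \<open>0 < \<epsilon> / 8\<close>] by blast
  moreover obtain g2 I2 where "real_polynomial_function g2"
    "\<And>y. y \<in> {0..1} \<Longrightarrow> indicator {exp (- 1)<..} y \<le> y * g2 y"
    "((\<lambda>x. exp (- x) * g2 (exp (- x)) / sqrt x) has_integral I2) {0..}"
    "I2 - 2 \<le> 2 * \<eta> + 2 * (\<epsilon> / 8) * sqrt pi"
    using polynomial_above_step[OF \<eta>(1) \<open>0 < \<epsilon> / 8\<close>] by blast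
  ultimately show ?thesis
    using error by (intro that[of g1 g2 I1 I2]) auto
qed

section \<open>Monotone functions of square-root order at zero\<close>

lemma monotone_div_sqrt_bounds:
  fixes f :: "real \<Rightarrow> real"
  assumes mono: "mono_on {0<..} f" and nonneg: "\<And>u. 0 < u \<Longrightarrow> 0 \<le> f u"
    and n: "1 \<le> n" and u: "1 / (real n + 1) < u" "u \<le> 1 / real n"
  shows "f (1 / (real n + 1)) * sqrt n \<le> f u / sqrt u"
    and "f u / sqrt u \<le> f (1 / real n) * sqrt (real n + 1)"
proof -
  have "0 < u"
    by (rule order.strict_trans[OF _ u(1)]) simp
  have f_le: "f (1 / (real n + 1)) \<le> f u" "f u \<le> f (1 / real n)"
    using u n \<open>0 < u\<close> by (auto intro!: mono_onD[OF mono])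
  have "real n \<le> 1 / u" "1 / u \<le> real n + 1"
    using u n \<open>0 < u\<close> by (simp_all add: field_simps)
  then have sqrt_le: "sqrt n \<le> sqrt (1 / u)" "sqrt (1 / u) \<le> sqrt (real n + 1)"
    by (auto intro: real_sqrt_le_mono)
  have "f u / sqrt u = f u * sqrt (1 / u)"
    by (simp add: real_sqrt_divide)
  moreover have "f (1 / (real n + 1)) * sqrt n \<le> f u * sqrt (1 / u)"
    by (rule mult_mono[OF f_le(1) sqrt_le(1)]) (use \<open>0 < u\<close> in \<open>simp_all add: nonneg\<close>)
  moreover have "f u * sqrt (1 / u) \<le> f (1 / real n) * sqrt (real n + 1)"
    by (rule mult_mono[OF f_le(2) sqrt_le(2)]) (use n \<open>0 < u\<close> in \<open>simp_all add: nonneg\<close>)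
  ultimately show "f (1 / (real n + 1)) * sqrt n \<le> f u / sqrt u"
    "f u / sqrt u \<le> f (1 / real n) * sqrt (real n + 1)"
    by simp_all
qed

lemma floor_inverse_bracket:
  fixes u :: real
  assumes "0 < u" "u < 1"
  shows "1 \<le> nat \<lfloor>1 / u\<rfloor>" "1 / (real (nat \<lfloor>1 / u\<rfloor>) + 1) < u" "u \<le> 1 / real (nat \<lfloor>1 / u\<rfloor>)"
proof -
  define k where "k = \<lfloor>1 / u\<rfloor>"
  have "1 \<le> k"
    using assms by (simp add: k_def le_floor_iff)
  then have k: "real (nat k) = of_int k" "1 \<le> nat k"
    by simp_all
  have "of_int k \<le> 1 / u" "1 / u < of_int k + 1"
    unfolding k_def by linarith+
  with k assms have "1 / (real (nat k) + 1) < u" "u \<le> 1 / real (nat k)"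
    by (simp_all add: field_simps)
  with k show "1 \<le> nat \<lfloor>1 / u\<rfloor>" "1 / (real (nat \<lfloor>1 / u\<rfloor>) + 1) < u"
    "u \<le> 1 / real (nat \<lfloor>1 / u\<rfloor>)"
    by (simp_all only: k_def)
qed

lemma tendsto_div_sqrt_of_monotone:
  fixes f :: "real \<Rightarrow> real"
  assumes mono: "mono_on {0<..} f" and nonneg: "\<And>u. 0 < u \<Longrightarrow> 0 \<le> f u"
    and lim: "(\<lambda>n. sqrt n * f (1 / n)) \<longlonglongrightarrow> L"
  shows "((\<lambda>u. f u / sqrt u) \<longlongrightarrow> L) (at_right 0)"
proof (rule real_tendsto_sandwich)
  define N where "N u = nat \<lfloor>1 / u\<rfloor>" for u :: real
  define lower where "lower n = f (1 / (real n + 1)) * sqrt n" for n :: nat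
  define upper where "upper n = f (1 / real n) * sqrt (real n + 1)" for n :: nat
  have bracket: "lower (N u) \<le> f u / sqrt u \<and> f u / sqrt u \<le> upper (N u)" if "0 < u" "u < 1" for u
    using monotone_div_sqrt_bounds[OF mono nonneg floor_inverse_bracket[OF that]]
    by (simp add: N_def lower_def upper_def)
  have "eventually (\<lambda>u::real. 0 < u \<and> u < 1) (at_right 0)"
    unfolding eventually_at_right_field by (intro exI[of _ 1]) auto
  then show "eventually (\<lambda>u. lower (N u) \<le> f u / sqrt u) (at_right 0)"
    "eventually (\<lambda>u. f u / sqrt u \<le> upper (N u)) (at_right 0)"
    by (auto elim!: eventually_mono dest: bracket)
  have "filterlim N sequentially (at_right 0)"
    unfolding N_def by (intro filterlim_compose[OF filterlim_nat_sequentially]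
        filterlim_compose[OF filterlim_floor_sequentially] filterlim_divide_at_infinity) real_asymp
  moreover have "(\<lambda>n. sqrt (real n / (real n + 1))) \<longlonglongrightarrow> 1"
    by real_asymp
  from tendsto_mult[OF LIMSEQ_Suc[OF lim] this]
  have "(\<lambda>n. sqrt (Suc n) * f (1 / Suc n) * sqrt (real n / (real n + 1))) \<longlonglongrightarrow> L"
    by simp
  then have "lower \<longlonglongrightarrow> L"
    by (rule Lim_transform_eventually)
       (intro always_eventually allI, simp add: lower_def real_sqrt_divide field_simps)
  moreover have "(\<lambda>n. sqrt ((real n + 1) / n)) \<longlonglongrightarrow> 1"
    by real_asymp
  from tendsto_mult[OF lim this]
  have "(\<lambda>n. sqrt n * f (1 / n) * sqrt ((real n + 1) / n)) \<longlonglongrightarrow> L"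
    by simp
  then have "upper \<longlonglongrightarrow> L"
    by (rule Lim_transform_eventually)
       (intro eventually_sequentiallyI[of 1], simp add: upper_def real_sqrt_divide field_simps)
  ultimately show "((\<lambda>u. lower (N u)) \<longlongrightarrow> L) (at_right 0)" "((\<lambda>u. upper (N u)) \<longlongrightarrow> L) (at_right 0)"
    by (auto intro: filterlim_compose)
qed

lemma sqrt_secant_slopes_near_half:
  fixes L e :: real
  assumes "0 < e"
  obtains s where "0 < s" "s < 1" "L / 2 - e \<le> L * ((sqrt (1 + s) - 1) / s)"
    "L * ((1 - sqrt (1 - s)) / s) \<le> L / 2 + e"
proof -
  have "((\<lambda>s::real. (sqrt (1 + s) - 1) / s) \<longlongrightarrow> 1 / 2) (at_right 0)"
    by real_asymp
  from tendsto_mult[OF tendsto_const[of L] this]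
  have "eventually (\<lambda>s. L / 2 - e < L * ((sqrt (1 + s) - 1) / s)) (at_right 0)"
    using \<open>0 < e\<close> by (intro order_tendstoD(1)) auto
  moreover have "((\<lambda>s::real. (1 - sqrt (1 - s)) / s) \<longlongrightarrow> 1 / 2) (at_right 0)"
    by real_asymp
  from tendsto_mult[OF tendsto_const[of L] this]
  have "eventually (\<lambda>s. L * ((1 - sqrt (1 - s)) / s) < L / 2 + e) (at_right 0)"
    using \<open>0 < e\<close> by (intro order_tendstoD(2)) auto
  moreover have "eventually (\<lambda>s::real. 0 < s \<and> s < 1) (at_right 0)"
    unfolding eventually_at_right_field by (intro exI[of _ 1]) auto
  ultimately have "eventually (\<lambda>s. L / 2 - e < L * ((sqrt (1 + s) - 1) / s)
      \<and> L * ((1 - sqrt (1 - s)) / s) < L / 2 + e \<and> 0 < s \<and> s < 1) (at_right 0)"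
    by eventually_elim blast
  then obtain s where "L / 2 - e < L * ((sqrt (1 + s) - 1) / s)"
    "L * ((1 - sqrt (1 - s)) / s) < L / 2 + e" "0 < s" "s < 1"
    using eventually_happens'[OF trivial_limit_at_right_real] by blast
  then show ?thesis
    by (intro that[of s]) auto
qed

lemma increment_quotient_bounds:
  fixes R d :: "real \<Rightarrow> real"
  assumes increment: "\<And>h1 h2. 0 < h1 \<Longrightarrow> h1 < h2 \<Longrightarrow> h2 < r \<Longrightarrow>
      d h2 * (h2 - h1) \<le> R h2 - R h1 \<and> R h2 - R h1 \<le> d h1 * (h2 - h1)"
    and s: "0 < s" "s < 1" and h: "0 < h" "(1 + s) * h < r"
  shows "(R ((1 + s) * h) / sqrt ((1 + s) * h) * sqrt (1 + s) - R h / sqrt h) / s \<le> d h * sqrt h"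
    and "d h * sqrt h \<le> (R h / sqrt h - R ((1 - s) * h) / sqrt ((1 - s) * h) * sqrt (1 - s)) / s"
proof -
  have h_scaled: "0 < (1 - s) * h" "(1 - s) * h < h" "h < (1 + s) * h"
    using s h by (auto simp: field_simps)
  have sqrt_ratio: "s * h / (s * sqrt h) = sqrt h"
    using s h by (simp add: real_div_sqrt)
  have "(R ((1 + s) * h) / sqrt ((1 + s) * h) * sqrt (1 + s) - R h / sqrt h) / s
      = (R ((1 + s) * h) / (sqrt (1 + s) * sqrt h) * sqrt (1 + s) - R h / sqrt h) / s"
    by (simp only: real_sqrt_mult)
  also have "\<dots> = (R ((1 + s) * h) - R h) / (s * sqrt h)"
    using s h by (simp add: field_simps)
  also have "\<dots> \<le> d h * (s * h) / (s * sqrt h)"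
    using increment[of h "(1 + s) * h"] h h_scaled s
    by (intro divide_right_mono) (auto simp: algebra_simps)
  also have "\<dots> = d h * sqrt h"
    using sqrt_ratio by (metis times_divide_eq_right)
  finally show "(R ((1 + s) * h) / sqrt ((1 + s) * h) * sqrt (1 + s) - R h / sqrt h) / s \<le> d h * sqrt h" .
  have "d h * sqrt h = d h * (s * h) / (s * sqrt h)"
    using sqrt_ratio by (metis times_divide_eq_right)
  also have "\<dots> \<le> (R h - R ((1 - s) * h)) / (s * sqrt h)"
    using increment[of "(1 - s) * h" h] h h_scaled s
    by (intro divide_right_mono) (auto simp: algebra_simps)
  also have "\<dots> = (R h / sqrt h - R ((1 - s) * h) / (sqrt (1 - s) * sqrt h) * sqrt (1 - s)) / s"
    using s h by (simp add: field_simps)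
  also have "\<dots> = (R h / sqrt h - R ((1 - s) * h) / sqrt ((1 - s) * h) * sqrt (1 - s)) / s"
    by (simp only: real_sqrt_mult)
  finally show "d h * sqrt h \<le> (R h / sqrt h - R ((1 - s) * h) / sqrt ((1 - s) * h) * sqrt (1 - s)) / s" .
qed

lemma monotone_density_sqrt:
  fixes R d :: "real \<Rightarrow> real"
  assumes lim: "((\<lambda>h. R h / sqrt h) \<longlongrightarrow> L) (at_right 0)" and "0 < r"
    and increment: "\<And>h1 h2. 0 < h1 \<Longrightarrow> h1 < h2 \<Longrightarrow> h2 < r \<Longrightarrow>
      d h2 * (h2 - h1) \<le> R h2 - R h1 \<and> R h2 - R h1 \<le> d h1 * (h2 - h1)"
  shows "((\<lambda>h. d h * sqrt h) \<longlongrightarrow> L / 2) (at_right 0)"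
proof (rule tendsto_sandwich_approx)
  fix e :: real assume "0 < e"
  then obtain s where s: "0 < s" "s < 1" "L / 2 - e \<le> L * ((sqrt (1 + s) - 1) / s)"
    "L * ((1 - sqrt (1 - s)) / s) \<le> L / 2 + e"
    by (rule sqrt_secant_slopes_near_half)
  define Q where "Q h = R h / sqrt h" for h
  have Q_lim: "(Q \<longlongrightarrow> L) (at_right 0)"
    using lim by (simp add: Q_def[abs_def])
  have scale: "filterlim (\<lambda>h. c * h) (at_right 0) (at_right (0::real))" if "0 < c" for c :: real
    using filterlim_times_pos[OF filterlim_ident that, of 0] by simp
  define lower where "lower h = (Q ((1 + s) * h) * sqrt (1 + s) - Q h) / s" for h
  define upper where "upper h = (Q h - Q ((1 - s) * h) * sqrt (1 - s)) / s" for h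
  have "(lower \<longlongrightarrow> (L * sqrt (1 + s) - L) / s) (at_right 0)"
    unfolding lower_def using s by (intro tendsto_intros filterlim_compose[OF Q_lim scale] Q_lim) auto
  moreover have "(upper \<longlongrightarrow> (L - L * sqrt (1 - s)) / s) (at_right 0)"
    unfolding upper_def using s by (intro tendsto_intros filterlim_compose[OF Q_lim scale] Q_lim) auto
  moreover have "L / 2 - e \<le> (L * sqrt (1 + s) - L) / s" "(L - L * sqrt (1 - s)) / s \<le> L / 2 + e"
    using s by (simp_all add: right_diff_distrib)
  moreover have "eventually (\<lambda>h. 0 < h \<and> (1 + s) * h < r) (at_right 0)"
    unfolding eventually_at_right_field using \<open>0 < r\<close> s
    by (intro exI[of _ "r / (1 + s)"]) (auto simp: field_simps)
  then have "eventually (\<lambda>h. lower h \<le> d h * sqrt h \<and> d h * sqrt h \<le> upper h) (at_right 0)"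
    by eventually_elim
       (use increment_quotient_bounds[OF increment s(1,2)] in \<open>auto simp: lower_def upper_def Q_def\<close>)
  ultimately show "\<exists>g h a b. eventually (\<lambda>x. g x \<le> d x * sqrt x \<and> d x * sqrt x \<le> h x) (at_right 0)
      \<and> (g \<longlongrightarrow> a) (at_right 0) \<and> (h \<longlongrightarrow> b) (at_right 0) \<and> L / 2 - e \<le> a \<and> b \<le> L / 2 + e"
    using s by blast
qed

section \<open>Karamata's Tauberian theorem on the unit interval\<close>

lemma exp_neg_less_power_iff:
  fixes t :: real
  assumes "0 \<le> t" "0 < n"
  shows "exp (- 1) < t ^ n \<longleftrightarrow> exp (- (1 / n)) < t"
proof -
  have "exp (- (1 / n)) ^ n = exp (- 1)"
    using assms by (subst exp_of_nat_mult[symmetric]) simp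
  moreover have "exp (- (1 / n)) ^ n < t ^ n \<longleftrightarrow> exp (- (1 / n)) < t"
    using assms power_mono_iff[of t "exp (- (1 / n))" n] by (metis exp_ge_zero not_le)
  ultimately show ?thesis
    by simp
qed

lemma power_times_polynomial_eq:
  fixes y :: real
  shows "y ^ n * (\<Sum>i\<le>N. a i * (y ^ n) ^ i) = (\<Sum>i\<le>N. a i * y ^ (n * (i + 1)))"
  by (simp add: sum_distrib_left power_mult[symmetric] power_add[symmetric] algebra_simps)

locale unit_interval_measure = finite_measure \<mu> for \<mu> :: "real measure" +
  assumes sets_eq_borel: "sets \<mu> = sets borel"
    and AE_unit_interval: "AE t in \<mu>. t \<in> {0..1}"
begin

lemma space_eq_UNIV: "space \<mu> = UNIV"
  using sets_eq_imp_space_eq[OF sets_eq_borel] by simp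

lemma borel_measurable_eq: "borel_measurable \<mu> = borel_measurable borel"
  by (rule measurable_cong_sets[OF sets_eq_borel refl])

lemma integrable_bounded:
  fixes B :: real
  assumes "f \<in> borel_measurable borel" and "\<And>t. t \<in> {0..1} \<Longrightarrow> \<bar>f t\<bar> \<le> B"
  shows "integrable \<mu> f"
  by (rule integrable_const_bound[where B = B])
     (use AE_unit_interval assms in \<open>auto elim: eventually_mono simp: borel_measurable_eq\<close>)

lemma integrable_power: "integrable \<mu> (\<lambda>t. t ^ n)"
  by (rule integrable_bounded[where B = 1]) (auto simp: power_abs power_le_one)

lemma integral_power_mono:
  fixes f g :: "real \<Rightarrow> real"
  assumes "integrable \<mu> (\<lambda>t. f (t ^ n))" "integrable \<mu> (\<lambda>t. g (t ^ n))"
    and "\<And>y. y \<in> {0..1} \<Longrightarrow> f y \<le> g y"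
  shows "(\<integral>t. f (t ^ n) \<partial>\<mu>) \<le> (\<integral>t. g (t ^ n) \<partial>\<mu>)"
proof (rule integral_mono_AE[OF assms(1,2)])
  show "AE t in \<mu>. f (t ^ n) \<le> g (t ^ n)"
    using AE_unit_interval by eventually_elim (auto intro!: assms(3) power_le_one)
qed

lemma integral_power_times_polynomial:
  "(\<integral>t. t ^ n * (\<Sum>i\<le>N. a i * (t ^ n) ^ i) \<partial>\<mu>) = (\<Sum>i\<le>N. a i * (\<integral>t. t ^ (n * (i + 1)) \<partial>\<mu>))"
  by (simp add: power_times_polynomial_eq integrable_power)

lemma integrable_power_times_polynomial:
  "real_polynomial_function g \<Longrightarrow> integrable \<mu> (\<lambda>t. t ^ n * g (t ^ n))"
  by (auto simp: real_polynomial_function_iff_sum power_times_polynomial_eq integrable_power)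

lemma measure_tail_antimono: "s \<le> t \<Longrightarrow> measure \<mu> {t<..1} \<le> measure \<mu> {s<..1}"
  by (intro finite_measure_mono) (auto simp: sets_eq_borel)

lemma measure_eq_integral_step:
  assumes "0 < n"
  shows "measure \<mu> {exp (- (1 / n))<..1} = (\<integral>t. indicator {exp (- 1)<..} (t ^ n) \<partial>\<mu>)"
proof -
  have "AE t in \<mu>. indicator {exp (- (1 / n))<..1} t = (indicator {exp (- 1)<..} (t ^ n) :: real)"
    using AE_unit_interval by eventually_elim (use assms in \<open>auto simp: indicator_def exp_neg_less_power_iff\<close>)
  then have "(\<integral>t. (indicator {exp (- (1 / n))<..1} t :: real) \<partial>\<mu>) = (\<integral>t. indicator {exp (- 1)<..} (t ^ n) \<partial>\<mu>)"
    by (intro integral_cong_AE) (simp_all add: borel_measurable_eq)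
  then show ?thesis
    by (simp add: space_eq_UNIV)
qed

context
  fixes c :: real
  assumes moments: "(\<lambda>n. sqrt n * (\<integral>t. t ^ n \<partial>\<mu>)) \<longlonglongrightarrow> c"
begin

lemma moment_limit_nonneg: "0 \<le> c"
proof (rule LIMSEQ_le_const[OF moments])
  have "0 \<le> (\<integral>t. t ^ n \<partial>\<mu>)" for n
    using AE_unit_interval by (intro integral_nonneg_AE) (auto elim!: eventually_mono)
  then show "\<exists>N. \<forall>n\<ge>N. 0 \<le> sqrt n * (\<integral>t. t ^ n \<partial>\<mu>)"
    by auto
qed

lemma sqrt_moment_polynomial_limit:
  assumes "real_polynomial_function g"
    and I: "((\<lambda>x. exp (- x) * g (exp (- x)) / sqrt x) has_integral I) {0..}"
  shows "(\<lambda>n. sqrt n * (\<integral>t. t ^ n * g (t ^ n) \<partial>\<mu>)) \<longlonglongrightarrow> c * I / sqrt pi"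
proof -
  obtain a N where g: "g = (\<lambda>y. \<Sum>i\<le>N. a i * y ^ i)"
    using assms(1) by (auto simp: real_polynomial_function_iff_sum)
  have I_eq: "I = (\<Sum>i\<le>N. a i * sqrt (pi / (i + 1)))"
    using has_integral_unique[OF I[unfolded g] has_integral_exp_polynomial_div_sqrt] .
  have "(\<lambda>n. \<Sum>i\<le>N. a i * (sqrt n * (\<integral>t. t ^ (n * (i + 1)) \<partial>\<mu>)))
      \<longlonglongrightarrow> (\<Sum>i\<le>N. a i * (c / sqrt (i + 1)))"
    by (intro tendsto_sum tendsto_mult tendsto_const sqrt_scaled_subsequence[OF moments]) simp
  moreover have "(\<Sum>i\<le>N. a i * (c / sqrt (i + 1))) = c * I / sqrt pi"
    by (simp add: I_eq sum_distrib_left sum_divide_distrib real_sqrt_divide field_simps)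
  ultimately show ?thesis
    unfolding g integral_power_times_polynomial by (simp add: sum_distrib_left mult_ac)
qed

lemma step_measure_sandwich:
  assumes "0 < \<epsilon>"
  obtains g h a b
  where "eventually (\<lambda>n. g n \<le> sqrt n * measure \<mu> {exp (- (1 / n))<..1}
      \<and> sqrt n * measure \<mu> {exp (- (1 / n))<..1} \<le> h n) sequentially"
    and "g \<longlonglongrightarrow> a" "h \<longlonglongrightarrow> b" "c * (2 - \<epsilon>) / sqrt pi \<le> a" "b \<le> c * (2 + \<epsilon>) / sqrt pi"
proof -
  obtain g1 g2 I1 I2 where poly: "real_polynomial_function g1" "real_polynomial_function g2"
    and bounds: "\<And>y. y \<in> {0..1} \<Longrightarrow> y * g1 y \<le> indicator {exp (- 1)<..} y"
      "\<And>y. y \<in> {0..1} \<Longrightarrow> indicator {exp (- 1)<..} y \<le> y * g2 y"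
    and I: "((\<lambda>x. exp (- x) * g1 (exp (- x)) / sqrt x) has_integral I1) {0..}"
      "((\<lambda>x. exp (- x) * g2 (exp (- x)) / sqrt x) has_integral I2) {0..}" "2 - \<epsilon> \<le> I1" "I2 \<le> 2 + \<epsilon>"
    using polynomial_step_sandwich[OF assms] by blast
  have step_integrable: "integrable \<mu> (\<lambda>t. indicator {exp (- 1)<..} (t ^ n) :: real)" for n
    by (rule integrable_bounded[where B = 1]) auto
  have sandwich: "eventually (\<lambda>n. sqrt n * (\<integral>t. t ^ n * g1 (t ^ n) \<partial>\<mu>) \<le> sqrt n * measure \<mu> {exp (- (1 / n))<..1}
      \<and> sqrt n * measure \<mu> {exp (- (1 / n))<..1} \<le> sqrt n * (\<integral>t. t ^ n * g2 (t ^ n) \<partial>\<mu>)) sequentially"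
    using eventually_gt_at_top[of 0]
  proof eventually_elim
    case (elim n)
    have "(\<integral>t. t ^ n * g1 (t ^ n) \<partial>\<mu>) \<le> measure \<mu> {exp (- (1 / n))<..1}"
      unfolding measure_eq_integral_step[OF elim]
      by (rule integral_power_mono[where f = "\<lambda>y. y * g1 y" and g = "indicator {exp (- 1)<..}",
            OF integrable_power_times_polynomial[OF poly(1)] step_integrable bounds(1)])
    moreover have "measure \<mu> {exp (- (1 / n))<..1} \<le> (\<integral>t. t ^ n * g2 (t ^ n) \<partial>\<mu>)"
      unfolding measure_eq_integral_step[OF elim]
      by (rule integral_power_mono[where f = "indicator {exp (- 1)<..}" and g = "\<lambda>y. y * g2 y",
            OF step_integrable integrable_power_times_polynomial[OF poly(2)] bounds(2)])
    ultimately show ?case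
      by (simp add: mult_left_mono)
  qed
  have "c * (2 - \<epsilon>) / sqrt pi \<le> c * I1 / sqrt pi" "c * I2 / sqrt pi \<le> c * (2 + \<epsilon>) / sqrt pi"
    using I moment_limit_nonneg by (auto intro!: divide_right_mono mult_left_mono)
  with sandwich sqrt_moment_polynomial_limit[OF poly(1) I(1)] sqrt_moment_polynomial_limit[OF poly(2) I(2)]
  show ?thesis
    by (rule that)
qed

lemma tauberian_sqrt: "(\<lambda>n. sqrt n * measure \<mu> {exp (- (1 / n))<..1}) \<longlonglongrightarrow> 2 * c / sqrt pi"
proof (rule tendsto_sandwich_approx)
  fix e :: real assume "0 < e"
  define \<epsilon> where "\<epsilon> = e / (c + 1)"
  have "0 < c + 1"
    using moment_limit_nonneg by simp
  then have "0 < \<epsilon>" and "c * \<epsilon> \<le> e"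
    using \<open>0 < e\<close> moment_limit_nonneg by (simp_all add: \<epsilon>_def field_simps)
  have "c * \<epsilon> / sqrt pi \<le> c * \<epsilon>"
    using divide_left_mono[of 1 "sqrt pi" "c * \<epsilon>"] \<open>0 < \<epsilon>\<close> moment_limit_nonneg pi_gt3 by simp
  also have "\<dots> \<le> e"
    by fact
  finally have error: "c * \<epsilon> / sqrt pi \<le> e" .
  have "c * (2 - \<epsilon>) / sqrt pi = 2 * c / sqrt pi - c * \<epsilon> / sqrt pi"
    "c * (2 + \<epsilon>) / sqrt pi = 2 * c / sqrt pi + c * \<epsilon> / sqrt pi"
    by (simp_all add: field_simps)
  then have bounds: "2 * c / sqrt pi - e \<le> c * (2 - \<epsilon>) / sqrt pi"
    "c * (2 + \<epsilon>) / sqrt pi \<le> 2 * c / sqrt pi + e"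
    using diff_left_mono[OF error] add_left_mono[OF error] by simp_all
  obtain g h a b
    where sandwich: "eventually (\<lambda>n. g n \<le> sqrt n * measure \<mu> {exp (- (1 / n))<..1}
      \<and> sqrt n * measure \<mu> {exp (- (1 / n))<..1} \<le> h n) sequentially"
    and lim: "g \<longlonglongrightarrow> a" "h \<longlonglongrightarrow> b"
    and ab: "c * (2 - \<epsilon>) / sqrt pi \<le> a" "b \<le> c * (2 + \<epsilon>) / sqrt pi"
    by (rule step_measure_sandwich[OF \<open>0 < \<epsilon>\<close>])
  have "2 * c / sqrt pi - e \<le> a" "b \<le> 2 * c / sqrt pi + e"
    using order_trans[OF bounds(1) ab(1)] order_trans[OF ab(2) bounds(2)] by simp_all
  with sandwich lim show "\<exists>g h a b. eventually (\<lambda>n. g n \<le> sqrt n * measure \<mu> {exp (- (1 / n))<..1}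
      \<and> sqrt n * measure \<mu> {exp (- (1 / n))<..1} \<le> h n) sequentially
      \<and> g \<longlonglongrightarrow> a \<and> h \<longlonglongrightarrow> b \<and> 2 * c / sqrt pi - e \<le> a \<and> b \<le> 2 * c / sqrt pi + e"
    by blast
qed

lemma tail_sqrt_asymp: "((\<lambda>h. measure \<mu> {1 - h<..1} / sqrt h) \<longlongrightarrow> 2 * c / sqrt pi) (at_right 0)"
proof -
  have exp_tail: "((\<lambda>u. measure \<mu> {exp (- u)<..1} / sqrt u) \<longlongrightarrow> 2 * c / sqrt pi) (at_right 0)"
  proof (rule tendsto_div_sqrt_of_monotone)
    show "mono_on {0<..} (\<lambda>u. measure \<mu> {exp (- u)<..1})"
      by (intro mono_onI measure_tail_antimono) simp
  qed (simp_all add: tauberian_sqrt)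
  have log_lim: "filterlim (\<lambda>h::real. - ln (1 - h)) (at_right 0) (at_right 0)"
    by real_asymp
  have ratio_lim: "((\<lambda>h::real. sqrt (- ln (1 - h) / h)) \<longlongrightarrow> 1) (at_right 0)"
    by real_asymp
  have "((\<lambda>h. measure \<mu> {exp (- (- ln (1 - h)))<..1} / sqrt (- ln (1 - h))
      * sqrt (- ln (1 - h) / h)) \<longlongrightarrow> 2 * c / sqrt pi * 1) (at_right 0)"
    by (intro tendsto_mult ratio_lim filterlim_compose[OF exp_tail log_lim])
  moreover have "eventually (\<lambda>h::real. 0 < h \<and> h < 1) (at_right 0)"
    unfolding eventually_at_right_field by (intro exI[of _ 1]) auto
  then have "eventually (\<lambda>h. measure \<mu> {exp (- (- ln (1 - h)))<..1} / sqrt (- ln (1 - h))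
      * sqrt (- ln (1 - h) / h) = measure \<mu> {1 - h<..1} / sqrt h) (at_right 0)"
  proof eventually_elim
    case (elim h)
    have cancel: "z / sqrt l * sqrt (l / h) = z / sqrt h" if "0 < l" for z l :: real
      using that elim by (simp add: real_sqrt_divide)
    have "exp (- (- ln (1 - h))) = 1 - h"
      using elim by simp
    then show ?case
      using elim by (simp only:) (rule cancel, simp)
  qed
  ultimately show ?thesis
    by (simp add: tendsto_cong)
qed

end

context
  fixes D :: "real \<Rightarrow> real"
  assumes density: "\<And>A. A \<in> sets borel \<Longrightarrow> A \<subseteq> {0<..<1} \<Longrightarrow>
      emeasure \<mu> A = (\<integral>\<^sup>+ t\<in>A. ennreal (D t) \<partial>lborel)"
    and D_mono: "mono_on {0<..<1} D"
begin

text \<open>Only the positive part of \<open>D\<close> is seen by \<open>\<mu>\<close>, since \<open>ennreal\<close> truncates at 0.\<close>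

lemma interval_measure_density_bounds:
  assumes "0 < a" "a < b" "b < 1"
  shows "max (D a) 0 * (b - a) \<le> measure \<mu> {a<..b}"
    and "measure \<mu> {a<..b} \<le> max (D b) 0 * (b - a)"
proof -
  have box: "ennreal (max (D x) 0 * (b - a)) = (\<integral>\<^sup>+t. ennreal (D x) * indicator {a<..b} t \<partial>lborel)" for x
    using assms by (simp add: nn_integral_cmult_indicator ennreal_mult'' max_def ennreal_neg)
  have "(\<integral>\<^sup>+t. ennreal (D a) * indicator {a<..b} t \<partial>lborel)
      \<le> (\<integral>\<^sup>+t. ennreal (D t) * indicator {a<..b} t \<partial>lborel)"
    "(\<integral>\<^sup>+t. ennreal (D t) * indicator {a<..b} t \<partial>lborel)
      \<le> (\<integral>\<^sup>+t. ennreal (D b) * indicator {a<..b} t \<partial>lborel)"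
    using assms by (auto intro!: nn_integral_mono ennreal_leI mono_onD[OF D_mono] split: split_indicator)
  moreover have "emeasure \<mu> {a<..b} = (\<integral>\<^sup>+t. ennreal (D t) * indicator {a<..b} t \<partial>lborel)"
    using assms by (intro density) auto
  ultimately have "ennreal (max (D a) 0 * (b - a)) \<le> ennreal (measure \<mu> {a<..b})"
    "ennreal (measure \<mu> {a<..b}) \<le> ennreal (max (D b) 0 * (b - a))"
    by (simp_all only: box emeasure_eq_measure)
  then show "max (D a) 0 * (b - a) \<le> measure \<mu> {a<..b}"
    "measure \<mu> {a<..b} \<le> max (D b) 0 * (b - a)"
    using assms by simp_all
qed

lemma tail_increment_bounds:
  assumes "0 < h1" "h1 < h2" "h2 < 1"
  shows "max (D (1 - h2)) 0 * (h2 - h1) \<le> measure \<mu> {1 - h2<..1} - measure \<mu> {1 - h1<..1}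
    \<and> measure \<mu> {1 - h2<..1} - measure \<mu> {1 - h1<..1} \<le> max (D (1 - h1)) 0 * (h2 - h1)"
proof -
  have "measure \<mu> {1 - h2<..1} - measure \<mu> {1 - h1<..1} = measure \<mu> {1 - h2<..1 - h1}"
    using assms by (subst finite_measure_Diff[symmetric]) (auto simp: sets_eq_borel intro!: arg_cong[where f = "measure \<mu>"])
  then show ?thesis
    using interval_measure_density_bounds[of "1 - h2" "1 - h1"] assms by simp
qed

lemma density_sqrt_asymp:
  assumes tail: "((\<lambda>h. measure \<mu> {1 - h<..1} / sqrt h) \<longlongrightarrow> L) (at_right 0)" and "0 < L"
  shows "((\<lambda>h. D (1 - h) * sqrt h) \<longlongrightarrow> L / 2) (at_right 0)"
proof -
  have lim: "((\<lambda>h. max (D (1 - h)) 0 * sqrt h) \<longlongrightarrow> L / 2) (at_right 0)"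
    by (rule monotone_density_sqrt[OF tail zero_less_one]) (rule tail_increment_bounds)
  then have "eventually (\<lambda>h. 0 < max (D (1 - h)) 0 * sqrt h) (at_right 0)"
    using order_tendstoD(1)[OF lim, of 0] \<open>0 < L\<close> by simp
  then have "eventually (\<lambda>h. max (D (1 - h)) 0 * sqrt h = D (1 - h) * sqrt h) (at_right 0)"
    by eventually_elim (auto simp: max_def zero_less_mult_iff split: if_splits)
  with lim show ?thesis
    by (rule Lim_transform_eventually)
qed

end

end

theorem theorem3p9:
  fixes m :: "nat \<Rightarrow> real" and \<mu> :: "real measure" and D :: "real \<Rightarrow> real"
  assumes "moment_seq m"
    and "prob_space \<mu>" and "sets \<mu> = sets borel"
    and "emeasure \<mu> (- {0..1}) = 0"
    and "\<And>n. (\<integral>t. t ^ n \<partial>\<mu>) = m n"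
    and "\<And>A. A \<in> sets borel \<Longrightarrow> A \<subseteq> {0<..<1} \<Longrightarrow>
           emeasure \<mu> A = (\<integral>\<^sup>+ t\<in>A. ennreal (D t) \<partial>lborel)"
    and "mono_on {0<..<1} D"
  shows "D \<sim>[at_left 1] (\<lambda>t. 1 / sqrt (2 * pi * (1 - t)))"
proof -
  interpret prob_space \<mu>
    by (rule assms(2))
  interpret unit_interval_measure \<mu>
  proof
    show "AE t in \<mu>. t \<in> {0..1}"
      by (rule AE_I[of _ _ "- {0..1}"]) (auto simp: assms(3,4))
  qed (rule assms(3))
  define L where "L = 2 * (1 / sqrt 2) / sqrt pi"
  have "(\<lambda>n. sqrt n * (\<integral>t. t ^ n \<partial>\<mu>)) \<longlonglongrightarrow> 1 / sqrt 2"
    using moment_seq_sqrt_asymp[OF assms(1)] by (simp add: assms(5))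
  from tail_sqrt_asymp[OF this]
  have "((\<lambda>h. D (1 - h) * sqrt h) \<longlongrightarrow> L / 2) (at_right 0)"
    by (intro density_sqrt_asymp[OF assms(6,7)]) (simp_all add: L_def)
  moreover have "filterlim (\<lambda>t::real. 1 - t) (at_right 0) (at_left 1)"
    by real_asymp
  ultimately have "((\<lambda>t. sqrt (2 * pi) * (D t * sqrt (1 - t))) \<longlongrightarrow> sqrt (2 * pi) * (L / 2)) (at_left 1)"
    by (intro tendsto_mult tendsto_const) (auto dest: filterlim_compose)
  moreover have "sqrt (2 * pi) * (L / 2) = 1"
    by (simp add: L_def real_sqrt_mult)
  moreover have "sqrt (2 * pi) * (D t * sqrt (1 - t)) = D t / (1 / sqrt (2 * pi * (1 - t)))" for t
    by (simp add: real_sqrt_mult)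
  ultimately show ?thesis
    by (intro asymp_equivI') simp
qed

end
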